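(* For every positive integer $n$, as formal power series in $z$ (with coefficients polynomials in $q,t$), \[ \sum_{k \geq 0} \overline{{ n+k-1 \brack k}}_{q,t} z^k q^k = \frac{(-tzq^2;q)_{n-1}}{(zq;q)_{n}}. \]
   Context: An overpartition is a partition (a non-increasing finite sequence of positive integers) in which the last (i.e. smallest-position-last) occurrence of each distinct part size may be overlined. Its weight $|\lambda|$ is the sum of its parts. For integers $a,b$ with $0\le b\le a$, $\overline{{a \brack b}}_{q,t}$ denotes the polynomial $\sum_{\lambda} t^{\#_o(\lambda)} q^{|\lambda|}$, the sum running over all overpartitions $\lambda$ with largest part at most $a-b$ and at most $b$ parts, where $\#_o(\lambda)$ is the number of overlined parts of $\lambda$; for other integer pairs $(a,b)$ it is $0$. Notation: $(x;q)_k=(x)_k=\prod_{j=1}^{k}(1-xq^{j-1})$, with $(x)_0=1$. *)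

theory Defs
  imports "HOL-Computational_Algebra.Formal_Power_Series"
begin

text \<open>An overpartition is encoded as a pair (xs, S): xs is the underlying partition
(a non-increasing list of positive integers) and S is the set of part sizes whose
last occurrence is overlined (S must be a subset of the part sizes of xs).\<close>

definition overpartitions :: "nat \<Rightarrow> nat \<Rightarrow> (nat list \<times> nat set) set" where
  "overpartitions m b = {(xs, S). sorted_wrt (\<ge>) xs \<and> (\<forall>x\<in>set xs. 0 < x \<and> x \<le> m)
       \<and> length xs \<le> b \<and> S \<subseteq> set xs}"

definition ogauss :: "int \<Rightarrow> int \<Rightarrow> 'a::comm_ring_1 \<Rightarrow> 'a \<Rightarrow> 'a" where
  "ogauss a b q t = (if 0 \<le> b \<and> b \<le> a then
     (\<Sum>p\<in>overpartitions (nat (a - b)) (nat b). t ^ card (snd p) * q ^ sum_list (fst p))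
   else 0)"

definition qpoch :: "'a::comm_ring_1 \<Rightarrow> 'a \<Rightarrow> nat \<Rightarrow> 'a" where
  "qpoch x q k = (\<Prod>j<k. (1 - x * q ^ j))"

end

theory Submission
  imports Defs
begin

unbundle fps_syntax

text \<open>Sort overpartitions with parts at most \<open>m + 1\<close> and at most \<open>b + 1\<close> parts by their
largest part: either \<open>m + 1\<close> does not occur, or it occurs and is not overlined (remove one
copy), or it occurs exactly once and is overlined (remove it). This gives the recurrence
\<open>G(m+1, b+1) = G(m, b+1) + q^(m+1) G(m+1, b) + t q^(m+1) G(m, b)\<close>, which for the
generating series \<open>F_m(z) = \<Sum>\<^sub>k G(m, k) q^k z^k\<close> becomes the functional equation
\<open>(1 - q^(m+2) z) F_(m+1) = (1 + t q^(m+2) z) F_m\<close>, starting from \<open>F_0 = 1/(1 - q z)\<close>.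
Iterating yields the product formula; the series in the theorem is \<open>F_(n-1)\<close>.\<close>

definition overpartition_poly :: "nat \<Rightarrow> nat \<Rightarrow> 'a::comm_ring_1 \<Rightarrow> 'a \<Rightarrow> 'a" where
  "overpartition_poly m b q t =
     (\<Sum>p\<in>overpartitions m b. t ^ card (snd p) * q ^ sum_list (fst p))"

definition overpartition_series :: "nat \<Rightarrow> 'a::comm_ring_1 \<Rightarrow> 'a \<Rightarrow> 'a fps" where
  "overpartition_series m q t = Abs_fps (\<lambda>k. overpartition_poly m k q t * q ^ k)"

lemma finite_overpartitions: "finite (overpartitions m b)"
proof (rule finite_subset)
  show "overpartitions m b \<subseteq> {xs. set xs \<subseteq> {0..m} \<and> length xs \<le> b} \<times> Pow {0..m}"
    unfolding overpartitions_def by auto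
  show "finite ({xs. set xs \<subseteq> {0..m} \<and> length xs \<le> b} \<times> Pow {0..m})"
    by (intro finite_cartesian_product finite_lists_length_le) auto
qed

lemma overpartitions_0_right: "overpartitions m 0 = {([], {})}"
  unfolding overpartitions_def by auto

lemma overpartitions_0_left: "overpartitions 0 b = {([], {})}"
proof -
  have "xs = []" if "\<forall>x\<in>set xs. 0 < x \<and> x \<le> (0::nat)" for xs
    using that by (cases xs) auto
  then show ?thesis unfolding overpartitions_def by auto
qed

lemma overpartitions_Suc_SucE:
  assumes "(xs, S) \<in> overpartitions (Suc m) (Suc b)"
  obtains "(xs, S) \<in> overpartitions m (Suc b)"
  | ys where "xs = Suc m # ys" "(ys, S) \<in> overpartitions (Suc m) b"
  | ys where "xs = Suc m # ys" "S = insert (Suc m) (S - {Suc m})"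
      "(ys, S - {Suc m}) \<in> overpartitions m b"
proof -
  have sorted: "sorted_wrt (\<ge>) xs" and bounded: "\<forall>x\<in>set xs. 0 < x \<and> x \<le> Suc m"
    and len: "length xs \<le> Suc b" and sub: "S \<subseteq> set xs"
    using assms unfolding overpartitions_def by auto
  have smaller: "\<forall>x\<in>set zs. 0 < x \<and> x \<le> m"
    if "\<forall>x\<in>set zs. 0 < x \<and> x \<le> Suc m" "Suc m \<notin> set zs" for zs
    using that by (metis le_SucE)
  show thesis
  proof (cases "Suc m \<in> set xs")
    case False
    then show thesis using that(1) smaller[OF bounded] sorted len sub
      unfolding overpartitions_def by auto
  next
    case True
    then obtain ys where xs: "xs = Suc m # ys"
      using sorted bounded by (cases xs) (auto intro: antisym)
    have ys: "sorted_wrt (\<ge>) ys" "\<forall>x\<in>set ys. 0 < x \<and> x \<le> Suc m" "length ys \<le> b"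
      using sorted bounded len xs by auto
    show thesis
    proof (cases "Suc m \<in> set ys \<or> Suc m \<notin> S")
      case True
      then have "(ys, S) \<in> overpartitions (Suc m) b"
        using ys sub xs unfolding overpartitions_def by auto
      then show thesis using that(2)[OF xs] by blast
    next
      case False
      then have "(ys, S - {Suc m}) \<in> overpartitions m b"
        using ys smaller[of ys] sub xs unfolding overpartitions_def by auto
      moreover have "S = insert (Suc m) (S - {Suc m})" using False by auto
      ultimately show thesis using that(3)[OF xs] by blast
    qed
  qed
qed

lemma overpartitions_Suc_Suc:
  "overpartitions (Suc m) (Suc b) =
     overpartitions m (Suc b)
     \<union> (\<lambda>(ys, S). (Suc m # ys, S)) ` overpartitions (Suc m) b
     \<union> (\<lambda>(ys, S). (Suc m # ys, insert (Suc m) S)) ` overpartitions m b"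
proof (intro equalityI subsetI)
  fix p assume "p \<in> overpartitions (Suc m) (Suc b)"
  moreover obtain xs S where p: "p = (xs, S)" by (cases p)
  ultimately have "(xs, S) \<in> overpartitions (Suc m) (Suc b)" by simp
  then show "p \<in> overpartitions m (Suc b)
     \<union> (\<lambda>(ys, S). (Suc m # ys, S)) ` overpartitions (Suc m) b
     \<union> (\<lambda>(ys, S). (Suc m # ys, insert (Suc m) S)) ` overpartitions m b"
    by (cases rule: overpartitions_Suc_SucE) (force simp: p)+
qed (auto simp: overpartitions_def le_Suc_eq)

lemma overpartition_poly_0_right: "overpartition_poly m 0 q t = 1"
  unfolding overpartition_poly_def overpartitions_0_right by simp

lemma overpartition_poly_0_left: "overpartition_poly 0 b q t = 1"
  unfolding overpartition_poly_def overpartitions_0_left by simp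

lemma overpartition_poly_Suc_Suc:
  "overpartition_poly (Suc m) (Suc b) q t =
     overpartition_poly m (Suc b) q t + q ^ Suc m * overpartition_poly (Suc m) b q t
     + t * q ^ Suc m * overpartition_poly m b q t"
proof -
  let ?w = "\<lambda>p. t ^ card (snd p) * q ^ sum_list (fst p)"
  let ?keep = "\<lambda>(ys, S). (Suc m # ys, S)"
  let ?mark = "\<lambda>(ys, S). (Suc m # ys, insert (Suc m) S)"
  have unmarked: "Suc m \<notin> S \<and> finite S" if "(ys, S) \<in> overpartitions m b" for ys S
  proof -
    have "S \<subseteq> set ys" "\<forall>x\<in>set ys. x \<le> m"
      using that unfolding overpartitions_def by auto
    then show ?thesis by (meson Suc_n_not_le_n finite_set finite_subset subsetD)
  qed
  have inj_keep: "inj_on ?keep (overpartitions (Suc m) b)"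
    by (auto simp: inj_on_def)
  have inj_mark: "inj_on ?mark (overpartitions m b)"
    by (clarsimp simp: inj_on_def) (metis insert_ident unmarked)
  have disjoint: "?keep ` overpartitions (Suc m) b \<inter> ?mark ` overpartitions m b = {}"
    "overpartitions m (Suc b) \<inter>
       (?keep ` overpartitions (Suc m) b \<union> ?mark ` overpartitions m b) = {}"
    by (auto simp: overpartitions_def; meson Suc_n_not_le_n)+
  have keep: "sum ?w (?keep ` overpartitions (Suc m) b) = q ^ Suc m * overpartition_poly (Suc m) b q t"
    unfolding overpartition_poly_def sum.reindex[OF inj_keep] sum_distrib_left
    by (rule sum.cong) (auto simp: algebra_simps power_add)
  have mark: "sum ?w (?mark ` overpartitions m b) = t * q ^ Suc m * overpartition_poly m b q t"
    unfolding overpartition_poly_def sum.reindex[OF inj_mark] sum_distrib_left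
    by (rule sum.cong) (auto simp: algebra_simps power_add dest!: unmarked)
  show ?thesis
    unfolding overpartition_poly_def[of "Suc m" "Suc b"] overpartitions_Suc_Suc Un_assoc
    by (simp add: sum.union_disjoint finite_overpartitions disjoint keep mark
        overpartition_poly_def add.assoc)
qed

lemma ogauss_eq_overpartition_poly:
  "ogauss (int (Suc m) + int k - 1) (int k) q t = overpartition_poly m k q t"
  unfolding ogauss_def overpartition_poly_def by simp

lemma qpoch_Suc: "qpoch x q (Suc k) = qpoch x q k * (1 - x * q ^ k)"
  unfolding qpoch_def by simp

lemma qpoch_fps_nth_0:
  fixes x :: "'a::comm_ring_1 fps"
  assumes "x $ 0 = 0"
  shows "qpoch x q k $ 0 = 1"
  using assms by (induction k) (simp_all add: qpoch_def)

lemma fps_times_one_plus_X_nth_Suc: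
  fixes F :: "'a::comm_ring_1 fps"
  shows "(F * (1 + fps_const c * fps_X)) $ Suc k = F $ Suc k + c * F $ k"
proof -
  have "F * (1 + fps_const c * fps_X) = F + fps_const c * (fps_X * F)"
    by (simp add: algebra_simps)
  then show ?thesis by simp
qed

lemma fps_times_one_minus_X_nth_Suc:
  fixes F :: "'a::comm_ring_1 fps"
  shows "(F * (1 - fps_const c * fps_X)) $ Suc k = F $ Suc k - c * F $ k"
proof -
  have "F * (1 - fps_const c * fps_X) = F - fps_const c * (fps_X * F)"
    by (simp add: algebra_simps)
  then show ?thesis by simp
qed

lemma overpartition_series_0:
  "overpartition_series 0 q t * (1 - fps_const q * fps_X) = 1"
proof (rule fps_ext)
  fix k
  show "(overpartition_series 0 q t * (1 - fps_const q * fps_X)) $ k = (1::'a fps) $ k"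
    by (cases k) (simp_all only: fps_times_one_minus_X_nth_Suc,
        simp_all add: overpartition_series_def overpartition_poly_0_left)
qed

lemma overpartition_series_Suc:
  "overpartition_series (Suc m) q t * (1 - fps_const (q ^ Suc (Suc m)) * fps_X)
     = overpartition_series m q t * (1 + fps_const (t * q ^ Suc (Suc m)) * fps_X)"
proof (rule fps_ext)
  fix k
  let ?G = "\<lambda>m k. overpartition_poly m k q t"
  show "(overpartition_series (Suc m) q t * (1 - fps_const (q ^ Suc (Suc m)) * fps_X)) $ k
      = (overpartition_series m q t * (1 + fps_const (t * q ^ Suc (Suc m)) * fps_X)) $ k"
  proof (cases k)
    case 0
    then show ?thesis by (simp add: overpartition_series_def overpartition_poly_0_right)
  next
    case (Suc j)
    have "?G (Suc m) (Suc j) * q ^ Suc j - q ^ Suc (Suc m) * (?G (Suc m) j * q ^ j)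
        = ?G m (Suc j) * q ^ Suc j + t * q ^ Suc (Suc m) * (?G m j * q ^ j)"
      unfolding overpartition_poly_Suc_Suc by (simp add: algebra_simps)
    then show ?thesis
      unfolding Suc fps_times_one_plus_X_nth_Suc fps_times_one_minus_X_nth_Suc
      by (simp add: overpartition_series_def)
  qed
qed

lemma overpartition_series_mult_qpoch:
  "overpartition_series m q t * qpoch (fps_const q * fps_X) (fps_const q) (Suc m)
     = qpoch (- fps_const (t * q ^ 2) * fps_X) (fps_const q) m"
proof (induction m)
  case 0
  then show ?case using overpartition_series_0[of q t] by (simp add: qpoch_def)
next
  case (Suc m)
  have denominator: "fps_const q * fps_X * fps_const q ^ Suc m = fps_const (q ^ Suc (Suc m)) * fps_X"
    and numerator: "- fps_const (t * q ^ 2) * fps_X * fps_const q ^ m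
      = - fps_const (t * q ^ Suc (Suc m)) * fps_X"
    by (simp_all add: fps_const_power [symmetric] fps_const_mult [symmetric] power2_eq_square
        mult_ac del: fps_const_mult fps_const_power)
  have "overpartition_series (Suc m) q t * qpoch (fps_const q * fps_X) (fps_const q) (Suc (Suc m))
      = overpartition_series (Suc m) q t * (1 - fps_const (q ^ Suc (Suc m)) * fps_X)
        * qpoch (fps_const q * fps_X) (fps_const q) (Suc m)"
    unfolding qpoch_Suc[of _ _ "Suc m"] denominator by (simp only: mult_ac)
  also have "\<dots> = overpartition_series m q t * qpoch (fps_const q * fps_X) (fps_const q) (Suc m)
        * (1 + fps_const (t * q ^ Suc (Suc m)) * fps_X)"
    unfolding overpartition_series_Suc by (simp only: mult_ac)
  also have "\<dots> = qpoch (- fps_const (t * q ^ 2) * fps_X) (fps_const q) m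
        * (1 + fps_const (t * q ^ Suc (Suc m)) * fps_X)"
    unfolding Suc.IH ..
  also have "\<dots> = qpoch (- fps_const (t * q ^ 2) * fps_X) (fps_const q) (Suc m)"
    unfolding qpoch_Suc numerator by (simp flip: fps_const_neg)
  finally show ?case .
qed

theorem theorem1p1:
  fixes q t :: "'a::field" and n :: nat
  assumes "n \<ge> 1"
  shows "Abs_fps (\<lambda>k. ogauss (int n + int k - 1) (int k) q t * q ^ k)
       = qpoch (- fps_const (t * q ^ 2) * fps_X) (fps_const q) (n - 1)
         / qpoch (fps_const q * fps_X) (fps_const q) n"
proof -
  obtain m where n: "n = Suc m" using assms by (cases n) auto
  let ?D = "qpoch (fps_const q * fps_X) (fps_const q) n"
  have "?D $ 0 = 1" by (rule qpoch_fps_nth_0) simp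
  then have "?D \<noteq> 0" by auto
  have "Abs_fps (\<lambda>k. ogauss (int n + int k - 1) (int k) q t * q ^ k)
      = overpartition_series m q t"
    unfolding overpartition_series_def n ogauss_eq_overpartition_poly ..
  also have "\<dots> = overpartition_series m q t * ?D / ?D"
    using \<open>?D \<noteq> 0\<close> by simp
  also have "\<dots> = qpoch (- fps_const (t * q ^ 2) * fps_X) (fps_const q) (n - 1) / ?D"
    unfolding n overpartition_series_mult_qpoch by simp
  finally show ?thesis .
qed

end
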